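(* Let $V$ be one of the following algebraic tensor products of $\mathfrak{sl}(2,\mathbb{C})$-modules: (i) $N(0,b)\otimes N(a,0)$ with $a,b\in\mathbb{R}_{<0}$; (ii) $N(-1-x+iy,x+iy)\otimes N(a,0)$ with $-1\le x<0$, $y\in\mathbb{R}_{>0}$, $a\in\mathbb{R}_{<0}$; (iii) $N(a_1,a_2)\otimes N(a,0)$ with $-1<a_1,a_2<0$, $a\in\mathbb{R}_{<0}$. Write the first factor as $N(b_1,b_2)$ (so $(b_1,b_2)=(0,b)$, resp. $(-1-x+iy,x+iy)$, resp. $(a_1,a_2)$), let $x(k)$ be its standard basis, let $y(l)=x(-l)$ ($l\in\mathbb{Z}_{\ge0}$) be the reindexed standard basis of $N(a,0)$, and put $z(k,l)=x(k)\otimes y(l)$. For $n_0\in\mathbb{Z}$ let $V_{n_0}$ be the weight space of $V$ of weight $b_1-b_2+a+2n_0$ (spanned by the $z(k,l)$ with $k-l=n_0$), let $l_0$ be the smallest $l\in\mathbb{Z}_{\ge0}$ for which $z(l+n_0,l)$ is defined (i.e. $l+n_0$ is an index of the basis of the first factor), and set $z_{n_0}=z(l_0+n_0,l_0)$. Let $\mathfrak{c}=\mathbb{C}\,(FE)$, so that $\mathcal{U}(\mathfrak{c})=\mathbb{C}[FE]\subset\mathcal{U}(\mathfrak{sl}(2,\mathbb{C}))$. Then: (1) as a $\mathcal{U}(\mathfrak{c})$-module, $V_{n_0}$ is cyclic, generated by $z_{n_0}$; (2) the map $\rho_{n_0}:\mathcal{U}(\mathfrak{c})\to V_{n_0}$,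 $\rho_{n_0}(u)=u\cdot z_{n_0}$, is a bijection.
   Context: $\mathfrak{sl}(2,\mathbb{C})$ has basis $H,E,F$ with $[H,E]=2E$, $[H,F]=-2F$, $[E,F]=H$; it acts on tensor products by $X(v\otimes w)=Xv\otimes w+v\otimes Xw$. For $(c_1,c_2)\in\mathbb{C}^2$ let $\mathcal{K}(c_1,c_2)$ be the set of $k\in\mathbb{Z}$ such that for each $i\in\{1,2\}$ with $c_i\in\mathbb{Z}$ one has ($c_i+(-1)^{i-1}k<0$ iff $c_i<0$). The module $N(c_1,c_2)$ has basis $\{x(k):k\in\mathcal{K}(c_1,c_2)\}$ (the "standard basis"; $x(k):=0$ for $k\notin\mathcal{K}$), with $H\cdot x(k)=(c_1-c_2+2k)x(k)$ and: (I) if neither $c_1$ nor $c_2$ is a negative integer: $E x(k)=(c_2-k)x(k+1)$, $F x(k)=(c_1+k)x(k-1)$; (II) if $c_1$ is not a negative integer and $c_2$ is: $E x(k)=x(k+1)$, $F x(k)=(c_1+k)(c_2-k+1)x(k-1)$; (III) if $c_1$ is a negative integer and $c_2$ is not: $E x(k)=(c_1+k+1)(c_2-k)x(k+1)$, $F x(k)=x(k-1)$; (IV) if both are negative integers: $E x(k)=(c_1+k+1)x(k+1)$, $F x(k)=(c_2-k+1)x(k-1)$. For $a<0$ the index set of $N(a,0)$ is contained in $\mathbb{Z}_{\le 0}$, whence the reindexing $y(l)=x(-l)$. *)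

theory Defs
  imports Complex_Main "HOL-Computational_Algebra.Polynomial"
begin

definition negint :: "complex \<Rightarrow> bool" where
  "negint c \<longleftrightarrow> (\<exists>n::int. n < 0 \<and> c = of_int n)"

text \<open>Index set K(c1,c2); for an integer c, "c < 0" means Re c < 0.\<close>
definition inK :: "complex \<Rightarrow> complex \<Rightarrow> int \<Rightarrow> bool" where
  "inK c1 c2 k \<longleftrightarrow>
     (c1 \<in> \<int> \<longrightarrow> (Re (c1 + of_int k) < 0 \<longleftrightarrow> Re c1 < 0)) \<and>
     (c2 \<in> \<int> \<longrightarrow> (Re (c2 - of_int k) < 0 \<longleftrightarrow> Re c2 < 0))"

text \<open>E x(k) = eN c1 c2 k * x(k+1),  F x(k) = fN c1 c2 k * x(k-1),  H x(k) = hN c1 c2 k * x(k).\<close>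
definition eN :: "complex \<Rightarrow> complex \<Rightarrow> int \<Rightarrow> complex" where
  "eN c1 c2 k =
    (if \<not> negint c1 \<and> \<not> negint c2 then c2 - of_int k
     else if \<not> negint c1 \<and> negint c2 then 1
     else if negint c1 \<and> \<not> negint c2 then (c1 + of_int k + 1) * (c2 - of_int k)
     else c1 + of_int k + 1)"

definition fN :: "complex \<Rightarrow> complex \<Rightarrow> int \<Rightarrow> complex" where
  "fN c1 c2 k =
    (if \<not> negint c1 \<and> \<not> negint c2 then c1 + of_int k
     else if \<not> negint c1 \<and> negint c2 then (c1 + of_int k) * (c2 - of_int k + 1)
     else if negint c1 \<and> \<not> negint c2 then 1
     else c2 - of_int k + 1)"

definition hN :: "complex \<Rightarrow> complex \<Rightarrow> int \<Rightarrow> complex" where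
  "hN c1 c2 k = c1 - c2 + 2 * of_int k"

text \<open>Tensor product N(c1,c2) \<otimes> N(d1,d2): vectors are finitely supported coefficient
  functions on pairs (k,m) of indices; the basis vector tz k m is x(k) \<otimes> x(m)
  (and is 0 if k or m is not an index, matching the convention x(k) = 0).\<close>

type_synonym tvec = "int \<times> int \<Rightarrow> complex"

definition tB :: "complex \<Rightarrow> complex \<Rightarrow> complex \<Rightarrow> complex \<Rightarrow> (int \<times> int) set" where
  "tB c1 c2 d1 d2 = {(k, m). inK c1 c2 k \<and> inK d1 d2 m}"

definition tz :: "complex \<Rightarrow> complex \<Rightarrow> complex \<Rightarrow> complex \<Rightarrow> int \<Rightarrow> int \<Rightarrow> tvec" where
  "tz c1 c2 d1 d2 k m = (\<lambda>p. if p = (k, m) \<and> (k, m) \<in> tB c1 c2 d1 d2 then 1 else 0)"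

definition tV :: "complex \<Rightarrow> complex \<Rightarrow> complex \<Rightarrow> complex \<Rightarrow> tvec set" where
  "tV c1 c2 d1 d2 = {v. finite {p. v p \<noteq> 0} \<and> {p. v p \<noteq> 0} \<subseteq> tB c1 c2 d1 d2}"

definition linext :: "(int \<times> int \<Rightarrow> tvec) \<Rightarrow> tvec \<Rightarrow> tvec" where
  "linext f v = (\<lambda>p. \<Sum>q\<in>{q. v q \<noteq> 0}. v q * f q p)"

definition tE :: "complex \<Rightarrow> complex \<Rightarrow> complex \<Rightarrow> complex \<Rightarrow> tvec \<Rightarrow> tvec" where
  "tE c1 c2 d1 d2 = linext (\<lambda>(k, m) p.
      eN c1 c2 k * tz c1 c2 d1 d2 (k + 1) m p + eN d1 d2 m * tz c1 c2 d1 d2 k (m + 1) p)"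

definition tF :: "complex \<Rightarrow> complex \<Rightarrow> complex \<Rightarrow> complex \<Rightarrow> tvec \<Rightarrow> tvec" where
  "tF c1 c2 d1 d2 = linext (\<lambda>(k, m) p.
      fN c1 c2 k * tz c1 c2 d1 d2 (k - 1) m p + fN d1 d2 m * tz c1 c2 d1 d2 k (m - 1) p)"

definition tH :: "complex \<Rightarrow> complex \<Rightarrow> complex \<Rightarrow> complex \<Rightarrow> tvec \<Rightarrow> tvec" where
  "tH c1 c2 d1 d2 = linext (\<lambda>(k, m) p.
      (hN c1 c2 k + hN d1 d2 m) * tz c1 c2 d1 d2 k m p)"

definition tWeight :: "complex \<Rightarrow> complex \<Rightarrow> complex \<Rightarrow> complex \<Rightarrow> complex \<Rightarrow> tvec set" where
  "tWeight c1 c2 d1 d2 w = {v \<in> tV c1 c2 d1 d2. tH c1 c2 d1 d2 v = (\<lambda>p. w * v p)}"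

text \<open>Action of an element p(FE) of U(c) = C[FE] (identified with a polynomial p).\<close>
definition actFE :: "complex \<Rightarrow> complex \<Rightarrow> complex \<Rightarrow> complex \<Rightarrow> complex poly \<Rightarrow> tvec \<Rightarrow> tvec" where
  "actFE c1 c2 d1 d2 P v =
     (\<lambda>p. \<Sum>i\<le>degree P. coeff P i * (((tF c1 c2 d1 d2 \<circ> tE c1 c2 d1 d2) ^^ i) v) p)"

end

theory Submission
  imports Defs
begin

text \<open>
  The second factor has index m = -l \<le> 0, so the weight space V_n0 consists of the vectors
  supported on the diagonal k + m = n0, and on it z_n0 is the basis vector with the largest m.
  One application of FE moves the lowest nonzero entry of a vector on the diagonal one step down,
  multiplying it by eN(k) fN(m); in the three cases these factors never vanish.  Hence p(FE) z_n0
  has its lowest entry at depth l0 + deg p, with coefficient lead_coeff p times a nonzero product: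
  this gives injectivity, and peeling off lowest entries one at a time gives surjectivity.
\<close>

lemma linext_shift_apply:
  assumes "finite {q. v q \<noteq> 0}"
  shows "linext (\<lambda>(k, m) p. A k m * tz c1 c2 d1 d2 (k + s1) (m + t1) p
                          + C k m * tz c1 c2 d1 d2 (k + s2) (m + t2) p) v (k', m')
    = (if (k', m') \<in> tB c1 c2 d1 d2
       then v (k' - s1, m' - t1) * A (k' - s1) (m' - t1) + v (k' - s2, m' - t2) * C (k' - s2) (m' - t2)
       else 0)"
proof -
  have "linext (\<lambda>(k, m) p. A k m * tz c1 c2 d1 d2 (k + s1) (m + t1) p
                          + C k m * tz c1 c2 d1 d2 (k + s2) (m + t2) p) v (k', m')
    = (\<Sum>q\<in>{q. v q \<noteq> 0}.
         (if q = (k' - s1, m' - t1) \<and> (k', m') \<in> tB c1 c2 d1 d2 then v q * A (k' - s1) (m' - t1) else 0)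
       + (if q = (k' - s2, m' - t2) \<and> (k', m') \<in> tB c1 c2 d1 d2 then v q * C (k' - s2) (m' - t2) else 0))"
    unfolding linext_def by (rule sum.cong) (auto simp: tz_def distrib_left split: prod.splits)
  then show ?thesis
    using assms by (simp add: sum.distrib cong: if_cong)
qed

lemma tE_apply:
  assumes "finite {q. v q \<noteq> 0}"
  shows "tE c1 c2 d1 d2 v (k, m) = (if (k, m) \<in> tB c1 c2 d1 d2
           then v (k - 1, m) * eN c1 c2 (k - 1) + v (k, m - 1) * eN d1 d2 (m - 1) else 0)"
  using linext_shift_apply[OF assms, of "\<lambda>k m. eN c1 c2 k" c1 c2 d1 d2 1 0 "\<lambda>k m. eN d1 d2 m" 0 1]
  by (simp add: tE_def)

lemma tF_apply:
  assumes "finite {q. v q \<noteq> 0}"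
  shows "tF c1 c2 d1 d2 v (k, m) = (if (k, m) \<in> tB c1 c2 d1 d2
           then v (k + 1, m) * fN c1 c2 (k + 1) + v (k, m + 1) * fN d1 d2 (m + 1) else 0)"
  using linext_shift_apply[OF assms, of "\<lambda>k m. fN c1 c2 k" c1 c2 d1 d2 "-1" 0 "\<lambda>k m. fN d1 d2 m" 0 "-1"]
  by (simp add: tF_def)

lemma tH_apply:
  assumes "finite {q. v q \<noteq> 0}"
  shows "tH c1 c2 d1 d2 v (k, m) = (if (k, m) \<in> tB c1 c2 d1 d2
           then v (k, m) * (hN c1 c2 k + hN d1 d2 m) else 0)"
  using linext_shift_apply[OF assms, of "\<lambda>k m. hN c1 c2 k" c1 c2 d1 d2 0 0 "\<lambda>k m. hN d1 d2 m" 0 0]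
  by (simp add: tH_def distrib_left distrib_right)

lemma tV_finite_support: "v \<in> tV c1 c2 d1 d2 \<Longrightarrow> finite {q. v q \<noteq> 0}"
  by (simp add: tV_def)

lemma tV_support_in_tB: "v \<in> tV c1 c2 d1 d2 \<Longrightarrow> v q \<noteq> 0 \<Longrightarrow> q \<in> tB c1 c2 d1 d2"
  by (auto simp: tV_def)

lemma tV_if_support_shifted:
  assumes v: "v \<in> tV c1 c2 d1 d2" and "inj f" "inj g"
    and supp: "\<And>q. w q \<noteq> 0 \<Longrightarrow> q \<in> tB c1 c2 d1 d2 \<and> (v (f q) \<noteq> 0 \<or> v (g q) \<noteq> 0)"
  shows "w \<in> tV c1 c2 d1 d2"
proof -
  have "{q. w q \<noteq> 0} \<subseteq> f -` {q. v q \<noteq> 0} \<union> g -` {q. v q \<noteq> 0}"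
    using supp by auto
  moreover have "finite (f -` {q. v q \<noteq> 0} \<union> g -` {q. v q \<noteq> 0})"
    using tV_finite_support[OF v] \<open>inj f\<close> \<open>inj g\<close> by (intro finite_UnI finite_vimageI)
  ultimately show ?thesis
    using supp unfolding tV_def by (auto intro: finite_subset)
qed

lemma tE_tV: "v \<in> tV c1 c2 d1 d2 \<Longrightarrow> tE c1 c2 d1 d2 v \<in> tV c1 c2 d1 d2"
  by (rule tV_if_support_shifted[where f = "\<lambda>(k, m). (k - 1, m)" and g = "\<lambda>(k, m). (k, m - 1)"])
     (auto simp: inj_def tE_apply tV_finite_support split: if_splits)

lemma tF_tV: "v \<in> tV c1 c2 d1 d2 \<Longrightarrow> tF c1 c2 d1 d2 v \<in> tV c1 c2 d1 d2"
  by (rule tV_if_support_shifted[where f = "\<lambda>(k, m). (k + 1, m)" and g = "\<lambda>(k, m). (k, m + 1)"])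
     (auto simp: inj_def tF_apply tV_finite_support split: if_splits)

definition tDiag :: "complex \<Rightarrow> complex \<Rightarrow> complex \<Rightarrow> complex \<Rightarrow> int \<Rightarrow> tvec set" where
  "tDiag c1 c2 d1 d2 n = {v \<in> tV c1 c2 d1 d2. \<forall>k m. k + m \<noteq> n \<longrightarrow> v (k, m) = 0}"

lemma tH_apply_tV:
  assumes "v \<in> tV c1 c2 d1 d2"
  shows "tH c1 c2 d1 d2 v (k, m) = (c1 - c2 + d1 - d2 + 2 * of_int (k + m)) * v (k, m)"
  using tV_support_in_tB[OF assms, of "(k, m)"]
  by (cases "v (k, m) = 0") (simp_all add: tH_apply tV_finite_support[OF assms] hN_def algebra_simps)

lemma tWeight_eq_tDiag:
  "tWeight c1 c2 d1 d2 (c1 - c2 + d1 - d2 + 2 * of_int n) = tDiag c1 c2 d1 d2 n"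
proof -
  have eigen_iff: "(c1 - c2 + d1 - d2 + 2 * of_int (k + m)) * x = (c1 - c2 + d1 - d2 + 2 * of_int n) * x
      \<longleftrightarrow> k + m \<noteq> n \<longrightarrow> x = 0" for k m :: int and x :: complex
  proof -
    have "(c1 - c2 + d1 - d2 + 2 * of_int (k + m)) * x - (c1 - c2 + d1 - d2 + 2 * of_int n) * x
        = 2 * of_int (k + m - n) * x"
      by (simp add: algebra_simps)
    then show ?thesis
      by (metis (no_types, lifting) eq_iff_diff_eq_0 mult_eq_0_iff of_int_eq_0_iff zero_neq_numeral)
  qed
  have "tH c1 c2 d1 d2 v = (\<lambda>p. (c1 - c2 + d1 - d2 + 2 * of_int n) * v p)
      \<longleftrightarrow> (\<forall>k m. k + m \<noteq> n \<longrightarrow> v (k, m) = 0)" if "v \<in> tV c1 c2 d1 d2" for v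
    by (simp only: fun_eq_iff split_paired_All tH_apply_tV[OF that] eigen_iff)
  then show ?thesis
    unfolding tWeight_def tDiag_def by blast
qed

lemma tDiag_FE:
  assumes v: "v \<in> tDiag c1 c2 d1 d2 n"
  shows "tF c1 c2 d1 d2 (tE c1 c2 d1 d2 v) \<in> tDiag c1 c2 d1 d2 n"
proof -
  have Ev: "tE c1 c2 d1 d2 v \<in> tV c1 c2 d1 d2"
    using v by (simp add: tDiag_def tE_tV)
  have "v (k, m) = 0" "v (k + 1, m - 1) = 0" "v (k - 1, m + 1) = 0" if "k + m \<noteq> n" for k m
    using v that by (auto simp: tDiag_def)
  then show ?thesis
    using v tF_tV[OF Ev]
    by (simp add: tDiag_def tF_apply[OF tV_finite_support[OF Ev]] tE_apply tV_finite_support)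
qed

lemma tDiag_FE_power:
  "v \<in> tDiag c1 c2 d1 d2 n \<Longrightarrow> ((tF c1 c2 d1 d2 \<circ> tE c1 c2 d1 d2) ^^ i) v \<in> tDiag c1 c2 d1 d2 n"
  by (induction i) (simp_all add: tDiag_FE)

lemma tDiag_lincomb:
  assumes "finite I" and w: "\<And>i. i \<in> I \<Longrightarrow> w i \<in> tDiag c1 c2 d1 d2 n"
  shows "(\<lambda>p. \<Sum>i\<in>I. c i * w i p) \<in> tDiag c1 c2 d1 d2 n"
proof -
  let ?U = "\<Union>i\<in>I. {p. w i p \<noteq> 0}"
  have supp: "{p. (\<Sum>i\<in>I. c i * w i p) \<noteq> 0} \<subseteq> ?U"
    by (auto intro: ccontr)
  have "finite ?U" "?U \<subseteq> tB c1 c2 d1 d2"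
    using assms by (auto simp: tDiag_def tV_def)
  moreover have "(\<Sum>i\<in>I. c i * w i (k, m)) = 0" if "k + m \<noteq> n" for k m
    using w that by (simp add: tDiag_def)
  ultimately show ?thesis
    using finite_subset[OF supp] supp unfolding tDiag_def tV_def by blast
qed

lemma tDiag_diff:
  assumes "v \<in> tDiag c1 c2 d1 d2 n" "w \<in> tDiag c1 c2 d1 d2 n"
  shows "v - w \<in> tDiag c1 c2 d1 d2 n"
  using tDiag_lincomb[of "{True, False}" "\<lambda>b. if b then v else w" c1 c2 d1 d2 n "\<lambda>b. if b then 1 else -1"]
    assms by (simp add: fun_diff_def)

lemma actFE_eq_sum:
  assumes "degree P \<le> N"
  shows "actFE c1 c2 d1 d2 P v = (\<lambda>p. \<Sum>i\<le>N. coeff P i * (((tF c1 c2 d1 d2 \<circ> tE c1 c2 d1 d2) ^^ i) v) p)"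
  unfolding actFE_def
  by (intro ext sum.mono_neutral_left) (use assms in \<open>auto simp: coeff_eq_0\<close>)

lemma actFE_tDiag:
  assumes "v \<in> tDiag c1 c2 d1 d2 n"
  shows "actFE c1 c2 d1 d2 P v \<in> tDiag c1 c2 d1 d2 n"
  unfolding actFE_def by (simp add: assms tDiag_lincomb tDiag_FE_power)

lemma actFE_diff: "actFE c1 c2 d1 d2 (P - Q) v = actFE c1 c2 d1 d2 P v - actFE c1 c2 d1 d2 Q v"
proof -
  let ?N = "max (degree P) (degree Q)"
  have "degree (P - Q) \<le> ?N"
    by (rule degree_diff_le) auto
  then show ?thesis
    by (simp add: actFE_eq_sum[of _ ?N] fun_diff_def sum_subtractf left_diff_distrib)
qed

lemma FE_vanishes_below:
  assumes v: "v \<in> tV c1 c2 d1 d2" and below: "\<And>k m. m < L \<Longrightarrow> v (k, m) = 0"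
    and "m < L - 1"
  shows "tF c1 c2 d1 d2 (tE c1 c2 d1 d2 v) (k, m) = 0"
  using assms below[of m] below[of "m - 1"] below[of "m + 1"]
  by (simp add: tF_apply[OF tV_finite_support[OF tE_tV[OF v]]] tE_apply[OF tV_finite_support[OF v]])

lemma FE_corner:
  assumes v: "v \<in> tV c1 c2 d1 d2" and below: "\<And>k' m'. m' < m \<Longrightarrow> v (k', m') = 0"
    and step: "(k, m) \<in> tB c1 c2 d1 d2 \<Longrightarrow> (k + 1, m) \<in> tB c1 c2 d1 d2 \<and> (k + 1, m - 1) \<in> tB c1 c2 d1 d2"
  shows "tF c1 c2 d1 d2 (tE c1 c2 d1 d2 v) (k + 1, m - 1) = v (k, m) * (eN c1 c2 k * fN d1 d2 m)"
  using below step tV_support_in_tB[OF v, of "(k, m)"]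
  by (cases "v (k, m) = 0")
     (simp_all add: tF_apply[OF tV_finite_support[OF tE_tV[OF v]]] tE_apply[OF tV_finite_support[OF v]])

locale FE_cyclic_diagonal =
  fixes c1 c2 d1 d2 :: complex and n l0 :: int
  assumes tB_step: "(k, m) \<in> tB c1 c2 d1 d2 \<Longrightarrow> (k + 1, m) \<in> tB c1 c2 d1 d2 \<and> (k, m - 1) \<in> tB c1 c2 d1 d2"
    and top_in_tB: "(l0 + n, - l0) \<in> tB c1 c2 d1 d2"
    and top_is_highest: "(k, m) \<in> tB c1 c2 d1 d2 \<Longrightarrow> k + m = n \<Longrightarrow> m \<le> - l0"
    and ladder_nonzero: "eN c1 c2 (n + l0 + int j) * fN d1 d2 (- (l0 + int j)) \<noteq> 0"
begin

abbreviation FE :: "tvec \<Rightarrow> tvec" where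
  "FE \<equiv> tF c1 c2 d1 d2 \<circ> tE c1 c2 d1 d2"

abbreviation z_top :: tvec where
  "z_top \<equiv> tz c1 c2 d1 d2 (l0 + n) (- l0)"

abbreviation rho :: "complex poly \<Rightarrow> tvec" where
  "rho P \<equiv> actFE c1 c2 d1 d2 P z_top"

definition ladder_coeff :: "nat \<Rightarrow> complex" where
  "ladder_coeff i = (\<Prod>j<i. eN c1 c2 (n + l0 + int j) * fN d1 d2 (- (l0 + int j)))"

lemma ladder_coeff_nonzero: "ladder_coeff i \<noteq> 0"
  using ladder_nonzero by (simp add: ladder_coeff_def)

lemma z_top_tDiag: "z_top \<in> tDiag c1 c2 d1 d2 n"
proof -
  have "{q. z_top q \<noteq> 0} = {(l0 + n, - l0)}"
    using top_in_tB by (auto simp: tz_def)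
  then show ?thesis
    using top_in_tB by (auto simp: tDiag_def tV_def tz_def)
qed

lemma tDiag_vanishes_above:
  assumes "v \<in> tDiag c1 c2 d1 d2 n" "- l0 < m"
  shows "v (k, m) = 0"
proof (rule ccontr)
  assume "v (k, m) \<noteq> 0"
  then have "(k, m) \<in> tB c1 c2 d1 d2" "k + m = n"
    using assms(1) by (auto simp: tDiag_def tV_def)
  then show False
    using top_is_highest assms(2) by fastforce
qed

lemma FE_power_z_top:
  "(\<forall>k m. m < - (l0 + int i) \<longrightarrow> (FE ^^ i) z_top (k, m) = 0)
   \<and> (FE ^^ i) z_top (n + l0 + int i, - (l0 + int i)) = ladder_coeff i"
proof (induction i)
  case 0
  show ?case
    by (simp add: tz_def ladder_coeff_def top_in_tB add.commute)
next
  case (Suc i)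
  define W where "W = (FE ^^ i) z_top"
  have step: "(FE ^^ Suc i) z_top = tF c1 c2 d1 d2 (tE c1 c2 d1 d2 W)"
    by (simp add: W_def)
  have W: "W \<in> tV c1 c2 d1 d2"
    using tDiag_FE_power[OF z_top_tDiag] by (simp add: W_def tDiag_def)
  have below: "\<And>k m. m < - (l0 + int i) \<Longrightarrow> W (k, m) = 0"
    and corner: "W (n + l0 + int i, - (l0 + int i)) = ladder_coeff i"
    using Suc.IH by (simp_all add: W_def comp_def)
  have idx: "(n + l0 + int (Suc i), - (l0 + int (Suc i))) = (n + l0 + int i + 1, - (l0 + int i) - 1)"
    by simp
  have "tF c1 c2 d1 d2 (tE c1 c2 d1 d2 W) (k, m) = 0" if "m < - (l0 + int (Suc i))" for k m
    using FE_vanishes_below[OF W, where L = "- (l0 + int i)"] below that by simp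
  moreover have "tF c1 c2 d1 d2 (tE c1 c2 d1 d2 W) (n + l0 + int i + 1, - (l0 + int i) - 1)
      = W (n + l0 + int i, - (l0 + int i)) * (eN c1 c2 (n + l0 + int i) * fN d1 d2 (- (l0 + int i)))"
    by (rule FE_corner[OF W, where m = "- (l0 + int i)"]) (use below tB_step in auto)
  ultimately show ?case
    unfolding step idx using corner by (simp add: ladder_coeff_def)
qed

lemma rho_tDiag: "rho P \<in> tDiag c1 c2 d1 d2 n"
  by (rule actFE_tDiag[OF z_top_tDiag])

lemma rho_vanishes_below:
  assumes "degree P \<le> N" "m < - (l0 + int N)"
  shows "rho P (k, m) = 0"
  using assms FE_power_z_top by (simp add: actFE_eq_sum[OF assms(1)])

lemma rho_corner:
  assumes "degree P \<le> N"
  shows "rho P (n + l0 + int N, - (l0 + int N)) = coeff P N * ladder_coeff N"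
proof -
  have "{..N} = insert N {..<N}"
    by auto
  moreover have "(FE ^^ i) z_top (n + l0 + int N, - (l0 + int N)) = 0" if "i < N" for i
    using FE_power_z_top[of i] that by simp
  ultimately show ?thesis
    using FE_power_z_top[of N] by (simp add: actFE_eq_sum[OF assms])
qed

lemma inj_rho: "inj rho"
proof (rule injI)
  fix P Q
  assume eq: "rho P = rho Q"
  show "P = Q"
  proof (rule ccontr)
    assume "P \<noteq> Q"
    have "rho (P - Q) (n + l0 + int (degree (P - Q)), - (l0 + int (degree (P - Q))))
        = lead_coeff (P - Q) * ladder_coeff (degree (P - Q))"
      by (rule rho_corner) simp
    moreover have "lead_coeff (P - Q) \<noteq> 0"
      using \<open>P \<noteq> Q\<close> by (metis leading_coeff_0_iff right_minus_eq)
    ultimately have "rho (P - Q) (n + l0 + int (degree (P - Q)), - (l0 + int (degree (P - Q)))) \<noteq> 0"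
      by (simp only: mult_eq_0_iff ladder_coeff_nonzero) simp
    then show False
      using eq by (simp add: actFE_diff)
  qed
qed

lemma tDiag_vanishing_below_in_range:
  assumes "v \<in> tDiag c1 c2 d1 d2 n" "\<And>k m. m \<le> - (l0 + int i) \<Longrightarrow> v (k, m) = 0"
  shows "v \<in> range rho"
  using assms
proof (induction i arbitrary: v)
  case 0
  have "v (k, m) = 0" for k m
    using 0 tDiag_vanishes_above[OF 0(1), of m k] by (cases "m \<le> - l0") simp_all
  then have "v = rho 0"
    by (simp add: fun_eq_iff actFE_def)
  then show ?case
    by blast
next
  case (Suc i)
  define P where "P = monom (v (n + l0 + int i, - (l0 + int i)) / ladder_coeff i) i"
  have deg: "degree P \<le> i"
    by (simp add: P_def degree_monom_le)
  have "(v - rho P) (k, m) = 0" if "m \<le> - (l0 + int i)" for k m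
  proof (cases "m = - (l0 + int i)")
    case True
    then show ?thesis
      using Suc.prems(1) rho_tDiag[of P] rho_corner[OF deg]
      by (cases "k + m = n") (auto simp: P_def ladder_coeff_nonzero tDiag_def)
  next
    case False
    with that show ?thesis
      using Suc.prems(2) rho_vanishes_below[OF deg] by simp
  qed
  then obtain Q where Q: "v - rho P = rho Q"
    using Suc.IH tDiag_diff[OF Suc.prems(1) rho_tDiag] by blast
  have "rho (Q + P) - rho P = rho Q"
    using actFE_diff[of c1 c2 d1 d2 "Q + P" P] by simp
  then have "v = rho (Q + P)"
    using Q by (simp add: fun_eq_iff fun_diff_def diff_eq_eq)
  then show ?case
    by blast
qed

lemma tDiag_subset_range_rho: "tDiag c1 c2 d1 d2 n \<subseteq> range rho"
proof
  fix v
  assume v: "v \<in> tDiag c1 c2 d1 d2 n"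
  then have "finite (snd ` {q. v q \<noteq> 0})"
    by (auto simp: tDiag_def dest: tV_finite_support)
  then obtain M where M: "\<And>q. v q \<noteq> 0 \<Longrightarrow> M \<le> snd q"
    using bdd_below_finite unfolding bdd_below_def by fastforce
  have "v (k, m) = 0" if "m \<le> - (l0 + int (nat (- M - l0) + 1))" for k m
  proof -
    have "m < M"
      using that by linarith
    then show ?thesis
      using M[of "(k, m)"] by fastforce
  qed
  then show "v \<in> range rho"
    using tDiag_vanishing_below_in_range[OF v] by blast
qed

lemma bij_rho: "bij_betw rho UNIV (tDiag c1 c2 d1 d2 n)"
  using inj_rho rho_tDiag tDiag_subset_range_rho by (auto simp: bij_betw_def)

end

lemma negint_Ints: "negint c \<Longrightarrow> c \<in> \<int>"
  unfolding negint_def by auto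

lemma Complex_not_Ints: "y \<noteq> 0 \<Longrightarrow> Complex x y \<notin> \<int>"
  by (auto elim!: Ints_cases simp: complex_eq_iff)

lemma of_real_not_Ints:
  assumes "-1 < r" "r < 0"
  shows "complex_of_real r \<notin> \<int>"
proof
  assume "complex_of_real r \<in> \<int>"
  then obtain z where "r = of_int z"
    by (metis Ints_cases Re_complex_of_real of_real_of_int_eq)
  with assms show False
    by simp
qed

lemma inK_non_integral: "c1 \<notin> \<int> \<Longrightarrow> c2 \<notin> \<int> \<Longrightarrow> inK c1 c2 k"
  by (simp add: inK_def)

lemma eN_non_integral:
  assumes "c1 \<notin> \<int>" "c2 \<notin> \<int>"
  shows "eN c1 c2 k \<noteq> 0"
proof -
  have "c2 - of_int k \<noteq> 0"
    using assms(2) by (metis Ints_of_int right_minus_eq)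
  then show ?thesis
    using assms negint_Ints by (auto simp: eN_def)
qed

lemma inK_zero_neg_real: "b < 0 \<Longrightarrow> inK 0 (complex_of_real b) k \<longleftrightarrow> 0 \<le> k"
  by (auto simp: inK_def)

lemma eN_zero_neg_real:
  assumes "b < 0" "0 \<le> k"
  shows "eN 0 (complex_of_real b) k \<noteq> 0"
proof -
  have "Re (complex_of_real b - of_int k) \<noteq> 0"
    using assms by simp
  then have "complex_of_real b - of_int k \<noteq> 0"
    by (metis zero_complex.sel(1))
  then show ?thesis
    by (simp add: eN_def negint_def)
qed

lemma inK_neg_real_zero: "a < 0 \<Longrightarrow> inK (complex_of_real a) 0 m \<longleftrightarrow> m \<le> 0"
  by (auto simp: inK_def)

lemma fN_neg_real_zero:
  assumes "a < 0" "m \<le> 0"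
  shows "fN (complex_of_real a) 0 m \<noteq> 0"
proof -
  have "Re (complex_of_real a + of_int m) \<noteq> 0"
    using assms by simp
  then have "complex_of_real a + of_int m \<noteq> 0"
    by (metis zero_complex.sel(1))
  then show ?thesis
    by (simp add: fN_def negint_def)
qed

lemma first_factor_cases:
  assumes
    "(\<exists>b::real. b < 0 \<and> b1 = 0 \<and> b2 = complex_of_real b)
     \<or> (\<exists>x y :: real. -1 \<le> x \<and> x < 0 \<and> y > 0 \<and>
          b1 = Complex (-1 - x) y \<and> b2 = Complex x y)
     \<or> (\<exists>a1 a2 :: real. -1 < a1 \<and> a1 < 0 \<and> -1 < a2 \<and> a2 < 0 \<and>
          b1 = complex_of_real a1 \<and> b2 = complex_of_real a2)"
  shows "(\<exists>b::real. b < 0 \<and> b1 = 0 \<and> b2 = complex_of_real b) \<or> (b1 \<notin> \<int> \<and> b2 \<notin> \<int>)"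
  using assms
proof (elim disjE exE conjE)
  fix x y :: real
  assume "0 < y" "b1 = Complex (-1 - x) y" "b2 = Complex x y"
  then show ?thesis
    using Complex_not_Ints by auto
next
  fix a1 a2 :: real
  assume "-1 < a1" "a1 < 0" "-1 < a2" "a2 < 0" "b1 = complex_of_real a1" "b2 = complex_of_real a2"
  then show ?thesis
    using of_real_not_Ints by blast
qed blast

lemma first_factor_index_props:
  assumes "(\<exists>b::real. b < 0 \<and> b1 = 0 \<and> b2 = complex_of_real b) \<or> (b1 \<notin> \<int> \<and> b2 \<notin> \<int>)"
  shows "0 \<le> k \<Longrightarrow> inK b1 b2 k"
    and "inK b1 b2 k \<Longrightarrow> k \<le> k' \<Longrightarrow> inK b1 b2 k'"
    and "inK b1 b2 k \<Longrightarrow> eN b1 b2 k \<noteq> 0"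
  using assms
  by (auto simp: inK_zero_neg_real eN_zero_neg_real inK_non_integral eN_non_integral)

lemma Least_nonneg_int:
  fixes P :: "int \<Rightarrow> bool"
  assumes "0 \<le> l" "P l"
  defines "L \<equiv> LEAST l. 0 \<le> l \<and> P l"
  shows "0 \<le> L" "P L" "0 \<le> l' \<Longrightarrow> P l' \<Longrightarrow> L \<le> l'"
proof -
  define n where "n = (LEAST n::nat. P (int n))"
  have Pn: "P (int n)"
    unfolding n_def using assms by (metis LeastI nonneg_int_cases)
  have n_least: "int n \<le> l'" if "0 \<le> l'" "P l'" for l'
    using that Least_le[of "\<lambda>n. P (int n)" "nat l'"] by (simp add: n_def)
  have "L = int n"
    unfolding L_def by (rule Least_equality) (use Pn n_least in auto)
  then show "0 \<le> L" "P L" "0 \<le> l' \<Longrightarrow> P l' \<Longrightarrow> L \<le> l'"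
    using Pn n_least by auto
qed

lemma tensor_FE_cyclic_diagonal:
  assumes first_factor: "(\<exists>b::real. b < 0 \<and> b1 = 0 \<and> b2 = complex_of_real b) \<or> (b1 \<notin> \<int> \<and> b2 \<notin> \<int>)"
    and a_neg: "a < 0"
  shows "FE_cyclic_diagonal b1 b2 (complex_of_real a) 0 n0 (LEAST l::int. 0 \<le> l \<and> inK b1 b2 (l + n0))"
    (is "FE_cyclic_diagonal _ _ ?c _ _ ?l0")
proof -
  note K1 = first_factor_index_props[OF first_factor]
  note K2 = inK_neg_real_zero[OF a_neg]
  have "0 \<le> \<bar>n0\<bar>" "inK b1 b2 (\<bar>n0\<bar> + n0)"
    by (simp_all add: K1(1))
  note l0 = Least_nonneg_int[where P = "\<lambda>l. inK b1 b2 (l + n0)", OF this]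
  show ?thesis
  proof
    show "(k + 1, m) \<in> tB b1 b2 ?c 0 \<and> (k, m - 1) \<in> tB b1 b2 ?c 0"
      if "(k, m) \<in> tB b1 b2 ?c 0" for k m
      using that K1(2)[of k "k + 1"] by (simp add: tB_def K2)
    show "(?l0 + n0, - ?l0) \<in> tB b1 b2 ?c 0"
      using l0 by (simp add: tB_def K2)
    show "m \<le> - ?l0" if "(k, m) \<in> tB b1 b2 ?c 0" "k + m = n0" for k m
    proof -
      have "- m + n0 = k"
        using that(2) by simp
      then have "inK b1 b2 (- m + n0)" "0 \<le> - m"
        using that(1) by (simp_all add: tB_def K2)
      then show ?thesis
        using l0(3) by fastforce
    qed
    show "eN b1 b2 (n0 + ?l0 + int j) * fN ?c 0 (- (?l0 + int j)) \<noteq> 0" for j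
      using l0 K1(2)[of "?l0 + n0" "n0 + ?l0 + int j"] K1(3) fN_neg_real_zero[OF a_neg]
      by (simp add: add.commute)
  qed
qed

theorem mainTheorem2:
  fixes b1 b2 :: complex and a :: real and n0 :: int
  assumes first_factor:
    "(\<exists>b::real. b < 0 \<and> b1 = 0 \<and> b2 = complex_of_real b)
     \<or> (\<exists>x y :: real. -1 \<le> x \<and> x < 0 \<and> y > 0 \<and>
          b1 = Complex (-1 - x) y \<and> b2 = Complex x y)
     \<or> (\<exists>a1 a2 :: real. -1 < a1 \<and> a1 < 0 \<and> -1 < a2 \<and> a2 < 0 \<and>
          b1 = complex_of_real a1 \<and> b2 = complex_of_real a2)"
    and a_neg: "a < 0"
  defines "l0 \<equiv> (LEAST l::int. 0 \<le> l \<and> inK b1 b2 (l + n0))"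
  defines "zn0 \<equiv> tz b1 b2 (complex_of_real a) 0 (l0 + n0) (- l0)"
  defines "Vn0 \<equiv> tWeight b1 b2 (complex_of_real a) 0
                    (b1 - b2 + complex_of_real a + 2 * of_int n0)"
  defines "\<rho> \<equiv> (\<lambda>P. actFE b1 b2 (complex_of_real a) 0 P zn0)"
  shows "Vn0 = range \<rho> \<and> bij_betw \<rho> (UNIV :: complex poly set) Vn0"
proof -
  have "FE_cyclic_diagonal b1 b2 (complex_of_real a) 0 n0 l0"
    unfolding l0_def using tensor_FE_cyclic_diagonal[OF first_factor_cases[OF first_factor] a_neg] .
  then have "bij_betw \<rho> UNIV (tDiag b1 b2 (complex_of_real a) 0 n0)"
    unfolding \<rho>_def zn0_def by (rule FE_cyclic_diagonal.bij_rho)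
  moreover have "Vn0 = tDiag b1 b2 (complex_of_real a) 0 n0"
    using tWeight_eq_tDiag[of b1 b2 "complex_of_real a" 0 n0] by (simp add: Vn0_def)
  ultimately show ?thesis
    by (simp add: bij_betw_def)
qed

end
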